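(* Fix $n\ge 1$, $\Gamma\ge 1$, a score function $\varphi:(0,1)\to[0,\infty)$, and any threshold function $f:(0,1)\to\mathbb{R}_{>0}$. Consider all joint distributions of the treatment assignments allowed by the sensitivity null hypothesis $H_0(\Gamma)$. Among these, the conditional rejection probability $$\mathbb{P}\big(\exists x\in(0,1): T_n(x)\ge f(x)\,\big|\,\mathcal{F}\big)$$ is maximized by the distribution under which the signs are conditionally independent across pairs and $\mathbb{P}(Y_i>0\mid\mathcal{F})=\Gamma/(1+\Gamma)$ for every $i\in\{1,\dots,n\}$.
   Context: Paired observational study: there are $n$ pairs; in pair $i$, units $j=1,2$ have control potential outcome $R_{Cij}$, treated potential outcome $R_{Tij}$ and treatment indicator $Z_{ij}\in\{0,1\}$. Throughout, everything is conditional on the event that exactly one unit per pair is treated ($Z_{i1}+Z_{i2}=1$ for all $i$). $\mathcal{F}$ is the $\sigma$-field generated by all potential outcomes. Observed outcomes are $R^{obs}_{ij}=Z_{ij}R_{Tij}+(1-Z_{ij})R_{Cij}$, and $Y_i=(Z_{i1}-Z_{i2})(R^{obs}_{i1}-R^{obs}_{i2})$ is the treated-minus-control difference. Standing assumption: $\mathbb{P}(Y_i=0)=0$ for all $i$. For $\Gamma\ge1$, the sensitivity null $H_0(\Gamma)$ asserts: $R_{Tij}=R_{Cij}$ for all $i,j$; and conditional on $\mathcal{F}$, assignments are independent across pairs and for every $i$, $$\frac1\Gamma\le \frac{\mathbb{P}(Z_{i1}=1\mid\mathcal{F})/\mathbb{P}(Z_{i1}=0\mid\mathcal{F})}{\mathbb{P}(Z_{i2}=1\mid\mathcal{F})/\mathbb{P}(Z_{i2}=0\mid\mathcal{F})}\le\Gamma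 .$$ (Under $H_0(\Gamma)$, $Y_i=\pm|R_{Ci1}-R_{Ci2}|$ and $1/(1+\Gamma)\le\mathbb{P}(Y_i>0\mid\mathcal{F})\le\Gamma/(1+\Gamma)$.) Let $Y_{(1)},\dots,Y_{(n)}$ be the $Y_i$ ordered so that $|Y_{(1)}|\le\dots\le|Y_{(n)}|$. Set $c_i=\varphi(i/(n+1))$. Define $T_n(x)=0$ for $x<1/(n+1)$ and, for $x\ge 1/(n+1)$, $T_n(x)=\sum_{i=\lceil (1-x)(n+1)\rceil}^{n} c_i\,\mathbf{1}\{Y_{(i)}>0\}$. *)

theory Defs
  imports "HOL-Probability.Probability"
begin

(* Pairs are indexed by i \<in> {1..n}; units within a pair by j \<in> {1,2}.
   RC i j is the control potential outcome R_{Cij}; under H_0(\<Gamma>), R_T = R_C.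
   Z i = True means unit 1 of pair i is treated (Z_{i1}=1, Z_{i2}=0);
   Z i = False means unit 2 is treated (exactly one treated per pair). *)

definition Yobs :: "(nat \<Rightarrow> nat \<Rightarrow> real) \<Rightarrow> (nat \<Rightarrow> bool) \<Rightarrow> nat \<Rightarrow> real" where
  "Yobs RC Z i = (if Z i then RC i 1 - RC i 2 else RC i 2 - RC i 1)"

(* T_n(x); sigma gives the ordering: Y_(i) = Y (sigma i); c_i = phi(i/(n+1)) *)
definition Tstat :: "nat \<Rightarrow> (real \<Rightarrow> real) \<Rightarrow> (nat \<Rightarrow> nat) \<Rightarrow> (nat \<Rightarrow> real) \<Rightarrow> real \<Rightarrow> real" where
  "Tstat n \<phi> \<sigma> Y x =
     (if x < 1 / (real n + 1) then 0
      else (\<Sum>i\<in>{nat \<lceil>(1 - x) * (real n + 1)\<rceil>..n}.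
              \<phi> (real i / (real n + 1)) * (if Y (\<sigma> i) > 0 then 1 else 0)))"

(* Conditional (on F) law of the assignment vector: independent across pairs,
   with P(Z_{i1} = 1 | F) = q i. *)
definition assign_dist :: "nat \<Rightarrow> (nat \<Rightarrow> real) \<Rightarrow> (nat \<Rightarrow> bool) pmf" where
  "assign_dist n q = Pi_pmf {1..n} False (\<lambda>i. bernoulli_pmf (q i))"

definition admissible :: "nat \<Rightarrow> real \<Rightarrow> (nat \<Rightarrow> nat \<Rightarrow> real) \<Rightarrow> (nat \<Rightarrow> real) \<Rightarrow> bool" where
  "admissible n \<Gamma> RC q \<longleftrightarrow>
     (\<forall>i\<in>{1..n}. 1 / (1 + \<Gamma>) \<le> measure_pmf.prob (assign_dist n q) {Z. Yobs RC Z i > 0}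
              \<and> measure_pmf.prob (assign_dist n q) {Z. Yobs RC Z i > 0} \<le> \<Gamma> / (1 + \<Gamma>))"

definition reject_event :: "nat \<Rightarrow> (real \<Rightarrow> real) \<Rightarrow> (real \<Rightarrow> real) \<Rightarrow> (nat \<Rightarrow> nat) \<Rightarrow> (nat \<Rightarrow> nat \<Rightarrow> real) \<Rightarrow> (nat \<Rightarrow> bool) set" where
  "reject_event n \<phi> f \<sigma> RC = {Z. \<exists>x\<in>{0<..<1}. Tstat n \<phi> \<sigma> (Yobs RC Z) x \<ge> f x}"

end

theory Submission
  imports Defs
begin

text \<open>
  Couple the admissible assignment law with the extreme one pair by pair, so that whenever
  pair \<open>i\<close> has a positive difference under the first assignment it also has one under the
  second; this is possible because the extreme law gives every pair the largest admissible
  probability \<open>\<Gamma>/(1+\<Gamma>)\<close> of a positive difference. Since \<open>\<phi> \<ge> 0\<close>, each \<open>T\<^sub>n(x)\<close> can only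
  grow when more differences become positive, so the rejection event is upward closed and
  its probability can only increase along the coupling.
\<close>

lemma rel_pmf_bernoulli_imp:
  assumes "0 \<le> a" "a \<le> b" "b \<le> 1"
  shows "rel_pmf (\<longrightarrow>) (bernoulli_pmf a) (bernoulli_pmf b)"
proof
  define C where "C = bind_pmf (bernoulli_pmf b)
    (\<lambda>y. if y then map_pmf (\<lambda>x. (x, True)) (bernoulli_pmf (a / b)) else return_pmf (False, False))"
  have ab: "0 \<le> a / b" "a / b \<le> 1"
    using assms by (auto simp: divide_le_eq)
  have "map_pmf fst C = bind_pmf (bernoulli_pmf b) (\<lambda>y. if y then bernoulli_pmf (a / b) else return_pmf False)"
    unfolding C_def map_bind_pmf by (intro bind_pmf_cong refl) (auto simp: pmf.map_comp o_def)
  also have "\<dots> = bernoulli_pmf a"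
  proof (rule pmf_eqI)
    fix x :: bool
    show "pmf (bind_pmf (bernoulli_pmf b) (\<lambda>y. if y then bernoulli_pmf (a / b) else return_pmf False)) x
          = pmf (bernoulli_pmf a) x"
      using assms ab by (cases x; cases "b = 0") (auto simp: pmf_bind field_simps)
  qed
  finally show "map_pmf fst C = bernoulli_pmf a" .
  have "map_pmf snd C = bind_pmf (bernoulli_pmf b) return_pmf"
    unfolding C_def map_bind_pmf by (intro bind_pmf_cong refl) (auto simp: pmf.map_comp o_def)
  then show "map_pmf snd C = bernoulli_pmf b"
    by (simp add: bind_return_pmf')
  show "x \<longrightarrow> y" if "(x, y) \<in> set_pmf C" for x y
    using that unfolding C_def by (auto split: if_splits)
qed

lemma rel_pmf_bernoulli_preserve:
  assumes "0 \<le> a" "a \<le> 1" "0 \<le> b" "b \<le> 1"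
    and "pmf (bernoulli_pmf a) s \<le> pmf (bernoulli_pmf b) s"
  shows "rel_pmf (\<lambda>x y. x = s \<longrightarrow> y = s) (bernoulli_pmf a) (bernoulli_pmf b)"
proof (cases s)
  case True
  then show ?thesis
    using assms rel_pmf_bernoulli_imp[of a b] by simp
next
  case False
  then have "rel_pmf (\<longrightarrow>) (bernoulli_pmf b) (bernoulli_pmf a)"
    using assms by (intro rel_pmf_bernoulli_imp) auto
  then show ?thesis
    using False by (subst pmf.rel_flip[symmetric]) (auto elim: pmf.rel_mono_strong)
qed

lemma rel_pmf_Pi_pmf:
  assumes "finite A" "\<And>x. x \<in> A \<Longrightarrow> rel_pmf (R x) (p x) (q x)"
  shows "rel_pmf (\<lambda>f g. \<forall>x\<in>A. R x (f x) (g x)) (Pi_pmf A dflt p) (Pi_pmf A dflt q)"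
proof -
  obtain C where C: "\<And>x. x \<in> A \<Longrightarrow>
      (\<forall>uv\<in>set_pmf (C x). R x (fst uv) (snd uv)) \<and> map_pmf fst (C x) = p x \<and> map_pmf snd (C x) = q x"
    using assms(2) unfolding rel_pmf.simps by (metis prod.collapse)
  define J where "J = Pi_pmf A (dflt, dflt) C"
  have "map_pmf (\<lambda>h. fst \<circ> h) J = Pi_pmf A dflt p" "map_pmf (\<lambda>h. snd \<circ> h) J = Pi_pmf A dflt q"
    unfolding J_def using assms(1)
    by (auto simp: Pi_pmf_map[symmetric] C intro!: Pi_pmf_cong)
  moreover have "\<forall>x\<in>A. R x (fst (h x)) (snd (h x))" if "h \<in> set_pmf J" for h
    using that C assms(1) unfolding J_def by (auto simp: set_Pi_pmf PiE_dflt_def)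
  ultimately show ?thesis
    by (intro rel_pmf.intros[where pq = "map_pmf (\<lambda>h. (fst \<circ> h, snd \<circ> h)) J"])
       (auto simp: pmf.map_comp o_def)
qed

lemma rel_pmf_prob_mono:
  assumes "rel_pmf R p q" "\<And>x y. R x y \<Longrightarrow> x \<in> E \<Longrightarrow> y \<in> E"
  shows "measure_pmf.prob p E \<le> measure_pmf.prob q E"
proof -
  have "measure_pmf.prob p E \<le> measure_pmf.prob q {y. \<exists>x\<in>E. R x y}"
    using assms(1) by (rule rel_pmf_measureD)
  also have "\<dots> \<le> measure_pmf.prob q E"
    using assms(2) by (intro measure_pmf.finite_measure_mono) auto
  finally show ?thesis .
qed

lemma Yobs_pos_iff:
  assumes "RC i 1 \<noteq> RC i 2"
  shows "Yobs RC Z i > 0 \<longleftrightarrow> Z i = (RC i 2 < RC i 1)"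
  using assms by (auto simp: Yobs_def)

lemma prob_Yobs_pos:
  assumes "i \<in> {1..n}" "RC i 1 \<noteq> RC i 2"
  shows "measure_pmf.prob (assign_dist n q) {Z. Yobs RC Z i > 0}
         = pmf (bernoulli_pmf (q i)) (RC i 2 < RC i 1)"
proof -
  have "{Z. Yobs RC Z i > 0} = (\<lambda>Z. Z i) -` {RC i 2 < RC i 1}"
    using Yobs_pos_iff[of RC i, OF assms(2)] by auto
  moreover have "map_pmf (\<lambda>Z. Z i) (assign_dist n q) = bernoulli_pmf (q i)"
    unfolding assign_dist_def using assms(1) by (simp add: Pi_pmf_component)
  ultimately show ?thesis
    by (metis measure_map_pmf measure_pmf_single)
qed

lemma Tstat_mono:
  assumes "x < 1" "\<forall>t\<in>{0<..<1}. \<phi> t \<ge> 0" "\<sigma> ` {1..n} \<subseteq> {1..n}"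
    and "\<forall>i\<in>{1..n}. Y i > 0 \<longrightarrow> Y' i > 0"
  shows "Tstat n \<phi> \<sigma> Y x \<le> Tstat n \<phi> \<sigma> Y' x"
proof (cases "x < 1 / (real n + 1)")
  case False
  have summand_mono: "\<phi> (real i / (real n + 1)) * (if Y (\<sigma> i) > 0 then 1 else 0)
        \<le> \<phi> (real i / (real n + 1)) * (if Y' (\<sigma> i) > 0 then 1 else 0)"
    if i: "i \<in> {nat \<lceil>(1 - x) * (real n + 1)\<rceil>..n}" for i
  proof -
    have "0 < \<lceil>(1 - x) * (real n + 1)\<rceil>"
      using assms(1) by simp
    then have "i \<in> {1..n}"
      using i by auto
    then have "\<phi> (real i / (real n + 1)) \<ge> 0" "\<sigma> i \<in> {1..n}"
      using assms(2,3) by (auto simp: field_simps image_subset_iff)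
    then show ?thesis
      using assms(4) by auto
  qed
  show ?thesis
    unfolding Tstat_def if_not_P[OF False] by (rule sum_mono) (rule summand_mono)
qed (simp add: Tstat_def)

lemma reject_event_mono:
  assumes "Z \<in> reject_event n \<phi> f \<sigma> RC"
    and "\<forall>t\<in>{0<..<1}. \<phi> t \<ge> 0" "\<sigma> ` {1..n} \<subseteq> {1..n}"
    and "\<forall>i\<in>{1..n}. Yobs RC Z i > 0 \<longrightarrow> Yobs RC Z' i > 0"
  shows "Z' \<in> reject_event n \<phi> f \<sigma> RC"
proof -
  obtain x where "x \<in> {0<..<1}" "f x \<le> Tstat n \<phi> \<sigma> (Yobs RC Z) x"
    using assms(1) unfolding reject_event_def by auto
  moreover have "Tstat n \<phi> \<sigma> (Yobs RC Z) x \<le> Tstat n \<phi> \<sigma> (Yobs RC Z') x"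
    using calculation(1) assms(2-4) by (intro Tstat_mono) auto
  ultimately show ?thesis
    unfolding reject_event_def by force
qed

theorem proposition1:
  fixes n :: nat and \<Gamma> :: real and \<phi> f :: "real \<Rightarrow> real"
    and RC :: "nat \<Rightarrow> nat \<Rightarrow> real" and \<sigma> :: "nat \<Rightarrow> nat"
    and q qstar :: "nat \<Rightarrow> real"
  assumes "n \<ge> 1" and "\<Gamma> \<ge> 1"
    and "\<forall>x\<in>{0<..<1}. \<phi> x \<ge> 0"
    and "\<forall>x\<in>{0<..<1}. f x > 0"
    and "\<forall>i\<in>{1..n}. RC i 1 \<noteq> RC i 2"
    and "bij_betw \<sigma> {1..n} {1..n}"
    and "\<forall>i\<in>{1..n}. \<forall>j\<in>{1..n}. i \<le> j \<longrightarrow>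
           \<bar>RC (\<sigma> i) 1 - RC (\<sigma> i) 2\<bar> \<le> \<bar>RC (\<sigma> j) 1 - RC (\<sigma> j) 2\<bar>"
    and "\<forall>i\<in>{1..n}. 0 \<le> q i \<and> q i \<le> 1"
    and "admissible n \<Gamma> RC q"
    and "\<forall>i\<in>{1..n}. 0 \<le> qstar i \<and> qstar i \<le> 1"
    and "\<forall>i\<in>{1..n}. measure_pmf.prob (assign_dist n qstar) {Z. Yobs RC Z i > 0} = \<Gamma> / (1 + \<Gamma>)"
  shows "admissible n \<Gamma> RC qstar \<and>
         measure_pmf.prob (assign_dist n q) (reject_event n \<phi> f \<sigma> RC)
           \<le> measure_pmf.prob (assign_dist n qstar) (reject_event n \<phi> f \<sigma> RC)"
proof
  have "1 / (1 + \<Gamma>) \<le> \<Gamma> / (1 + \<Gamma>)"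
    using assms(2) by (simp add: divide_right_mono)
  then show "admissible n \<Gamma> RC qstar"
    unfolding admissible_def using assms(11) by simp
next
  let ?s = "\<lambda>i. RC i 2 < RC i 1"
  have "rel_pmf (\<lambda>x y. x = ?s i \<longrightarrow> y = ?s i) (bernoulli_pmf (q i)) (bernoulli_pmf (qstar i))"
    if i: "i \<in> {1..n}" for i
  proof (intro rel_pmf_bernoulli_preserve)
    have "measure_pmf.prob (assign_dist n q) {Z. Yobs RC Z i > 0} \<le> \<Gamma> / (1 + \<Gamma>)"
      using assms(9) i unfolding admissible_def by blast
    then show "pmf (bernoulli_pmf (q i)) (?s i) \<le> pmf (bernoulli_pmf (qstar i)) (?s i)"
      using i assms(5,11) prob_Yobs_pos[OF i, of RC] by metis
  qed (use i assms(8,10) in auto)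
  then have "rel_pmf (\<lambda>Z Z'. \<forall>i\<in>{1..n}. Z i = ?s i \<longrightarrow> Z' i = ?s i)
               (assign_dist n q) (assign_dist n qstar)"
    unfolding assign_dist_def by (intro rel_pmf_Pi_pmf) auto
  then show "measure_pmf.prob (assign_dist n q) (reject_event n \<phi> f \<sigma> RC)
             \<le> measure_pmf.prob (assign_dist n qstar) (reject_event n \<phi> f \<sigma> RC)"
  proof (rule rel_pmf_prob_mono)
    fix Z Z'
    assume signs: "\<forall>i\<in>{1..n}. Z i = ?s i \<longrightarrow> Z' i = ?s i"
      and rejected: "Z \<in> reject_event n \<phi> f \<sigma> RC"
    have "\<forall>i\<in>{1..n}. Yobs RC Z i > 0 \<longrightarrow> Yobs RC Z' i > 0"
      using signs assms(5) by (simp add: Yobs_pos_iff)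
    then show "Z' \<in> reject_event n \<phi> f \<sigma> RC"
      using rejected assms(3,6) reject_event_mono[of Z] by (simp add: bij_betw_def)
  qed
qed

end
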